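(* Let $N\ge 2$ and $1\le\tilde N\le N-1$ be integers. Let $\beta>0$ satisfy $(\beta+1)^{N-\tilde N-1}>\beta^{N-\tilde N+1}$, and suppose that, for all $x\in\mathcal{X}$, $$V_{\tilde N+1}^{\tilde N}(x)\le (\beta+1)\,V_{\tilde N}^{\tilde N}(x)\qquad\text{and}\qquad V_n^{\tilde N}(x)\le (\beta+1)\,l(x,\mu_n(x))\ \text{ for all } n\in\{\tilde N+1,\dots,N\}.$$ Set $$\alpha=1-\frac{\beta^{N-\tilde N+1}}{(\beta+1)^{N-\tilde N-1}}\in(0,1].$$ Then for every $x\in\mathcal{X}$, $$\alpha\, J_\infty^{N,\tilde N}(x)\le V_N^{\tilde N}(x).$$
   Context: Let $\mathcal{D}\subset\mathbb{R}^n$ and $\mathcal{U}\subset\mathbb{R}^m$ be compact, and let $f:\mathcal{D}\times\mathcal{U}\to\mathcal{D}$ define the discrete-time system $x(k+1)=f(x(k),u(k))$, with $f(0,0)=0$. The stage cost $l:\mathcal{D}\times\mathcal{U}\to[0,\infty)$ is positive definite with $l(0,0)=0$. The set $\mathcal{X}\subseteq\mathcal{D}$ is control invariant: for every $x\in\mathcal{X}$ there is $u\in\mathcal{U}$ with $f(x,u)\in\mathcal{X}$. For $x\in\mathcal{X}$ write $\mathcal{U}(x)=\{u\in\mathcal{U}: f(x,u)\in\mathcal{X}\}$. Fix integers $N$ and $\tilde N$ with $0\le\tilde N\le N-1$. Define value functions on $\mathcal{X}$ recursively (dynamic programming form of the MPC problem with prediction horizon $N$ in which the state constraint $x\in\mathcal{X}$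 is imposed only during the first $N-\tilde N$ steps, the last $\tilde N$ steps being unconstrained): - $V_0^{\tilde N}\equiv 0$. - For $n\in\{1,\dots,\tilde N\}$: $V_n^{\tilde N}(x)=\min_{u\in\mathcal{U}}\big[V_{n-1}^{\tilde N}(f(x,u))+l(x,u)\big]$, with $\mu_n(x)$ a minimizer. - For $n\in\{\tilde N+1,\dots,N\}$: $V_n^{\tilde N}(x)=\min_{u\in\mathcal{U}(x)}\big[V_{n-1}^{\tilde N}(f(x,u))+l(x,u)\big]$, with $\mu_n(x)$ a minimizer; in particular $f(x,\mu_n(x))\in\mathcal{X}$. All minima are assumed to be attained. The MPC closed loop applies the feedback $\mu_N$: given $x\in\mathcal{X}$, set $x(0)=x$ and $x(k+1)=f(x(k),\mu_N(x(k)))$. This trajectory remains in $\mathcal{X}$. The closed-loop infinite-horizon cost is $$J_\infty^{N,\tilde N}(x)=\sum_{k=0}^{\infty} l\big(x(k),\mu_N(x(k))\big).$$ *)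

theory Defs
  imports "HOL-Analysis.Analysis"
begin

definition Uadm :: "('x \<Rightarrow> 'u \<Rightarrow> 'x) \<Rightarrow> 'u set \<Rightarrow> 'x set \<Rightarrow> 'x \<Rightarrow> 'u set" where
  "Uadm f U X x = {u \<in> U. f x u \<in> X}"

fun Vfun :: "('x \<Rightarrow> 'u \<Rightarrow> 'x) \<Rightarrow> ('x \<Rightarrow> 'u \<Rightarrow> real) \<Rightarrow> 'u set \<Rightarrow> 'x set
              \<Rightarrow> nat \<Rightarrow> nat \<Rightarrow> 'x \<Rightarrow> real" where
  "Vfun f l U X Nt 0 x = 0"
| "Vfun f l U X Nt (Suc n) x =
     (if Suc n \<le> Nt then (INF u\<in>U. Vfun f l U X Nt n (f x u) + l x u)
      else (INF u\<in>Uadm f U X x. Vfun f l U X Nt n (f x u) + l x u))"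

definition cl_traj :: "('x \<Rightarrow> 'u \<Rightarrow> 'x) \<Rightarrow> ('x \<Rightarrow> 'u) \<Rightarrow> 'x \<Rightarrow> nat \<Rightarrow> 'x" where
  "cl_traj f mu x k = ((\<lambda>y. f y (mu y)) ^^ k) x"

end

theory Submission
  imports Defs
begin

text \<open>Relaxed dynamic programming: if $V_N$ decreases along the closed loop by at least
  $\alpha$ times the stage cost, summing the decrease bounds $\alpha J_\infty$ by $V_N$.
  For the decrease, shift the optimal open-loop prediction at $x$ by one step: its
  constrained part is admissible for the horizon-$N$ problem at the successor, with one stage
  left over that the bound $V_{\tilde N+1} \le (\beta+1) V_{\tilde N}$ pays for. The bound
  $V_n \le (\beta+1) l$ makes the predicted costs-to-go $V_{N-k}(x_k)$ decay at least
  geometrically with ratio $\beta/(\beta+1)$, and the tail thus costs at most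
  $\beta^{M+1}/(\beta+1)^{M-1}$ times the first stage cost, where $M = N - \tilde N$.\<close>

lemma power_mult_le_of_step_le:
  fixes s :: "nat \<Rightarrow> 'a :: linordered_idom"
  assumes "0 \<le> a" "0 \<le> b" and step: "\<And>k. k < j \<Longrightarrow> a * s (Suc k) \<le> b * s k"
  shows "a ^ j * s j \<le> b ^ j * s 0"
  using step
proof (induction j)
  case (Suc j)
  have "a ^ Suc j * s (Suc j) = a ^ j * (a * s (Suc j))" by (simp add: ac_simps)
  also have "\<dots> \<le> a ^ j * (b * s j)"
    using Suc.prems \<open>0 \<le> a\<close> by (intro mult_left_mono) auto
  also have "\<dots> = b * (a ^ j * s j)" by (simp add: ac_simps)
  also have "\<dots> \<le> b * (b ^ j * s 0)"
    using Suc \<open>0 \<le> b\<close> by (intro mult_left_mono) auto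
  finally show ?case by simp
qed simp

lemma geometric_tail_bound:
  fixes \<sigma> c :: "nat \<Rightarrow> real"
  assumes "0 < M" "0 < \<beta>"
    and \<sigma>_Suc: "\<And>k. k < M \<Longrightarrow> \<sigma> k = \<sigma> (Suc k) + c k"
    and \<sigma>_le: "\<And>k. k < M \<Longrightarrow> \<sigma> k \<le> (\<beta> + 1) * c k"
  shows "\<sigma> 1 + \<beta> * \<sigma> M \<le> \<sigma> 0 - (1 - \<beta> ^ (M + 1) / (\<beta> + 1) ^ (M - 1)) * c 0"
proof -
  have contraction: "(\<beta> + 1) * \<sigma> (Suc k) \<le> \<beta> * \<sigma> k" if "k < M" for k
    using \<sigma>_Suc[OF that] \<sigma>_le[OF that] by (simp add: algebra_simps)
  have "(\<beta> + 1) ^ (M - 1) * \<sigma> (Suc (M - 1)) \<le> \<beta> ^ (M - 1) * \<sigma> (Suc 0)"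
    using contraction \<open>0 < \<beta>\<close>
    by (intro power_mult_le_of_step_le[where s = "\<lambda>k. \<sigma> (Suc k)"]) auto
  then have decay: "(\<beta> + 1) ^ (M - 1) * \<sigma> M \<le> \<beta> ^ (M - 1) * \<sigma> 1"
    using \<open>0 < M\<close> by simp
  have \<sigma>1: "\<sigma> 1 = \<sigma> 0 - c 0" and "\<sigma> 1 \<le> \<beta> * c 0"
    using \<sigma>_Suc[of 0] \<sigma>_le[of 0] \<open>0 < M\<close> by (simp_all add: algebra_simps)
  have "(\<beta> + 1) ^ (M - 1) * (\<beta> * \<sigma> M) \<le> \<beta> * (\<beta> ^ (M - 1) * \<sigma> 1)"
    using decay \<open>0 < \<beta>\<close> by (simp add: mult.left_commute)
  also have "\<dots> \<le> \<beta> * (\<beta> ^ (M - 1) * (\<beta> * c 0))"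
    using \<open>\<sigma> 1 \<le> \<beta> * c 0\<close> \<open>0 < \<beta>\<close> by (intro mult_left_mono) auto
  also have "\<dots> = \<beta> ^ (M + 1) * c 0"
    using \<open>0 < M\<close> by (simp add: power_Suc[symmetric] power_Suc2[symmetric] del: power_Suc power_Suc2)
  finally have "\<beta> * \<sigma> M \<le> \<beta> ^ (M + 1) / (\<beta> + 1) ^ (M - 1) * c 0"
    using \<open>0 < \<beta>\<close> by (simp add: field_simps)
  then show ?thesis
    using \<sigma>1 by (simp add: algebra_simps)
qed

lemma relaxed_dp_inequality:
  fixes V c :: "'a \<Rightarrow> real" and g :: "'a \<Rightarrow> 'a"
  assumes invariant: "\<And>x. x \<in> S \<Longrightarrow> g x \<in> S"
    and V_nonneg: "\<And>x. x \<in> S \<Longrightarrow> 0 \<le> V x"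
    and c_nonneg: "\<And>x. x \<in> S \<Longrightarrow> 0 \<le> c x"
    and decrease: "\<And>x. x \<in> S \<Longrightarrow> V (g x) + \<alpha> * c x \<le> V x"
    and "0 < \<alpha>" and "x \<in> S"
  shows "summable (\<lambda>k. c ((g ^^ k) x)) \<and> \<alpha> * (\<Sum>k. c ((g ^^ k) x)) \<le> V x"
proof -
  have traj_in_S: "(g ^^ k) x \<in> S" for k
    by (induction k) (simp_all add: \<open>x \<in> S\<close> invariant)
  have telescoped: "V ((g ^^ K) x) + \<alpha> * (\<Sum>k<K. c ((g ^^ k) x)) \<le> V x" for K
  proof (induction K)
    case (Suc K)
    then show ?case
      using decrease[OF traj_in_S[of K]] by (simp add: algebra_simps)
  qed simp
  have partial_bound: "(\<Sum>k<K. \<alpha> * c ((g ^^ k) x)) \<le> V x" for K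
    using telescoped[of K] V_nonneg[OF traj_in_S[of K]] by (simp add: sum_distrib_left)
  have "(\<Sum>k<K. c ((g ^^ k) x)) \<le> V x / \<alpha>" for K
    using partial_bound[of K] \<open>0 < \<alpha>\<close> by (simp add: sum_distrib_left[symmetric] field_simps)
  then have summable: "summable (\<lambda>k. c ((g ^^ k) x))"
    using c_nonneg[OF traj_in_S] by (rule summableI_nonneg_bounded[rotated])
  have "\<alpha> * (\<Sum>k. c ((g ^^ k) x)) = (\<Sum>k. \<alpha> * c ((g ^^ k) x))"
    using suminf_mult[OF summable] by simp
  also have "\<dots> \<le> V x"
    by (rule suminf_le_const[OF summable_mult[OF summable] partial_bound])
  finally show ?thesis using summable by blast
qed

locale mpc_problem =
  fixes f :: "'x \<Rightarrow> 'u \<Rightarrow> 'x" and l :: "'x \<Rightarrow> 'u \<Rightarrow> real"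
    and U :: "'u set" and D X :: "'x set" and Nt :: nat
  assumes U_nonempty: "U \<noteq> {}"
    and f_maps: "\<And>x u. x \<in> D \<Longrightarrow> u \<in> U \<Longrightarrow> f x u \<in> D"
    and l_nonneg: "\<And>x u. x \<in> D \<Longrightarrow> u \<in> U \<Longrightarrow> 0 \<le> l x u"
    and X_sub: "X \<subseteq> D"
    and X_control_invariant: "\<And>x. x \<in> X \<Longrightarrow> Uadm f U X x \<noteq> {}"
begin

abbreviation V :: "nat \<Rightarrow> 'x \<Rightarrow> real" where
  "V \<equiv> Vfun f l U X Nt"

lemma V_nonneg_unconstrained: "n \<le> Nt \<Longrightarrow> x \<in> D \<Longrightarrow> 0 \<le> V n x"
proof (induction n arbitrary: x)
  case (Suc n)
  then have "0 \<le> V n (f x u) + l x u" if "u \<in> U" for u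
    using that f_maps l_nonneg by simp
  then show ?case
    using Suc.prems U_nonempty by (simp add: cINF_greatest)
qed simp

lemma V_nonneg: "x \<in> X \<Longrightarrow> 0 \<le> V n x"
proof (induction n arbitrary: x)
  case (Suc n)
  show ?case
  proof (cases "Suc n \<le> Nt")
    case True
    then show ?thesis using V_nonneg_unconstrained Suc.prems X_sub by blast
  next
    case False
    have "0 \<le> V n (f x u) + l x u" if "u \<in> Uadm f U X x" for u
      using that Suc X_sub l_nonneg by (auto simp: Uadm_def)
    then show ?thesis
      using False X_control_invariant[OF Suc.prems] by (simp add: cINF_greatest)
  qed
qed simp

lemma V_Suc_le:
  assumes "Nt \<le> n" "x \<in> X" "u \<in> Uadm f U X x"
  shows "V (Suc n) x \<le> V n (f x u) + l x u"
proof -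
  have "bdd_below ((\<lambda>u. V n (f x u) + l x u) ` Uadm f U X x)"
    using assms(2) X_sub by (intro bdd_belowI2[of _ 0]) (auto simp: Uadm_def V_nonneg l_nonneg)
  then have "(INF v\<in>Uadm f U X x. V n (f x v) + l x v) \<le> V n (f x u) + l x u"
    using assms(3) by (rule cINF_lower)
  then show ?thesis using assms(1) by simp
qed

lemma V_Suc_eq_minimizer:
  assumes "Nt \<le> n" "x \<in> X" "u \<in> Uadm f U X x"
    and "\<And>v. v \<in> Uadm f U X x \<Longrightarrow> V n (f x u) + l x u \<le> V n (f x v) + l x v"
  shows "V (Suc n) x = V n (f x u) + l x u"
  using assms by (auto intro!: cInf_eq_minimum)

lemma V_le_trajectory_cost:
  assumes "z 0 \<in> X" "Nt + j \<le> n"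
    and "\<And>k. k < j \<Longrightarrow> u k \<in> Uadm f U X (z k)"
    and "\<And>k. k < j \<Longrightarrow> z (Suc k) = f (z k) (u k)"
  shows "V n (z 0) \<le> (\<Sum>k<j. l (z k) (u k)) + V (n - j) (z j)"
  using assms(2-4)
proof (induction j)
  case (Suc j)
  have "z j \<in> X"
    using Suc.prems(2,3) \<open>z 0 \<in> X\<close> by (cases j) (auto simp: Uadm_def)
  moreover have "Nt \<le> n - Suc j" "u j \<in> Uadm f U X (z j)" "z (Suc j) = f (z j) (u j)"
    using Suc.prems by auto
  ultimately have "V (Suc (n - Suc j)) (z j) \<le> V (n - Suc j) (z (Suc j)) + l (z j) (u j)"
    by (metis V_Suc_le)
  moreover have "Suc (n - Suc j) = n - j" using Suc.prems(1) by simp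
  ultimately show ?case using Suc by simp
qed simp

end

locale mpc_feedback = mpc_problem f l U D X Nt
    for f :: "'x \<Rightarrow> 'u \<Rightarrow> 'x" and l U D X Nt +
  fixes mu :: "nat \<Rightarrow> 'x \<Rightarrow> 'u" and N :: nat
  assumes mu_admissible: "\<And>n x. n \<in> {Nt+1..N} \<Longrightarrow> x \<in> X \<Longrightarrow> mu n x \<in> Uadm f U X x"
    and mu_optimal: "\<And>n x u. n \<in> {Nt+1..N} \<Longrightarrow> x \<in> X \<Longrightarrow> u \<in> Uadm f U X x \<Longrightarrow>
        V (n - 1) (f x (mu n x)) + l x (mu n x) \<le> V (n - 1) (f x u) + l x u"
begin

lemma V_eq_mu:
  assumes "n \<in> {Nt+1..N}" "x \<in> X"
  shows "V n x = V (n - 1) (f x (mu n x)) + l x (mu n x)"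
proof -
  obtain m where "n = Suc m" "Nt \<le> m"
    using assms(1) by (cases n) auto
  moreover have "V (Suc m) x = V m (f x (mu n x)) + l x (mu n x)"
    using assms mu_admissible[of n x] mu_optimal[of n x] \<open>n = Suc m\<close> \<open>Nt \<le> m\<close>
    by (intro V_Suc_eq_minimizer) auto
  ultimately show ?thesis by simp
qed

primrec open_loop :: "'x \<Rightarrow> nat \<Rightarrow> 'x" where
  "open_loop x 0 = x"
| "open_loop x (Suc k) = f (open_loop x k) (mu (N - k) (open_loop x k))"

lemma open_loop_admissible:
  assumes "x \<in> X" "k < N - Nt"
  shows "mu (N - k) (open_loop x k) \<in> Uadm f U X (open_loop x k)"
    and "open_loop x (Suc k) \<in> X"
proof -
  have "open_loop x k \<in> X \<and> open_loop x (Suc k) \<in> X"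
    using assms(2)
  proof (induction k)
    case 0
    then show ?case using assms(1) mu_admissible[of N x] by (auto simp: Uadm_def)
  next
    case (Suc k)
    then show ?case using mu_admissible[of "N - Suc k" "open_loop x (Suc k)"] by (auto simp: Uadm_def)
  qed
  then show "mu (N - k) (open_loop x k) \<in> Uadm f U X (open_loop x k)" "open_loop x (Suc k) \<in> X"
    using assms(2) mu_admissible[of "N - k"] by auto
qed

lemma V_decrease:
  assumes x: "x \<in> X" and "Nt < N" and "0 < \<beta>"
    and V_Nt_Suc_le: "\<And>y. y \<in> X \<Longrightarrow> V (Nt + 1) y \<le> (\<beta> + 1) * V Nt y"
    and V_le_stage_cost: "\<And>y n. y \<in> X \<Longrightarrow> n \<in> {Nt+1..N} \<Longrightarrow> V n y \<le> (\<beta> + 1) * l y (mu n y)"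
  shows "V N (f x (mu N x)) + (1 - \<beta> ^ (N - Nt + 1) / (\<beta> + 1) ^ (N - Nt - 1)) * l x (mu N x)
    \<le> V N x"
proof -
  define M where "M = N - Nt"
  define z where "z = open_loop x"
  define \<sigma> where "\<sigma> k = V (N - k) (z k)" for k
  define c where "c k = l (z k) (mu (N - k) (z k))" for k
  have "0 < M" using \<open>Nt < N\<close> by (simp add: M_def)
  have z_in_X: "z k \<in> X" if "k \<le> M" for k
    using that x open_loop_admissible(2)[OF x, of "k - 1"] by (cases k) (auto simp: z_def M_def)
  have \<sigma>_Suc: "\<sigma> k = \<sigma> (Suc k) + c k" if "k < M" for k
    using V_eq_mu[of "N - k" "z k"] z_in_X[of k] that by (simp add: \<sigma>_def c_def z_def M_def)
  have \<sigma>_le: "\<sigma> k \<le> (\<beta> + 1) * c k" if "k < M" for k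
    using V_le_stage_cost[of "z k" "N - k"] z_in_X[of k] that by (simp add: \<sigma>_def c_def M_def)
  have z_Suc: "z (Suc k) = f (z k) (mu (N - k) (z k))" for k
    by (simp add: z_def)
  have mu_adm: "mu (N - k) (z k) \<in> Uadm f U X (z k)" if "k < M" for k
    using open_loop_admissible(1)[OF x] that by (simp add: z_def M_def)
  have "V N (z (Suc 0)) \<le> (\<Sum>k<M - 1. c (Suc k)) + V (N - (M - 1)) (z (Suc (M - 1)))"
    \<comment> \<open>the shifted prediction as a candidate for the horizon-N problem at the successor\<close>
    unfolding c_def
  proof (rule V_le_trajectory_cost[where z = "\<lambda>k. z (Suc k)"])
    show "z (Suc 0) \<in> X" "Nt + (M - 1) \<le> N"
      using z_in_X[of 1] \<open>0 < M\<close> by (simp_all add: M_def)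
    show "mu (N - Suc k) (z (Suc k)) \<in> Uadm f U X (z (Suc k))" if "k < M - 1" for k
      using mu_adm[of "Suc k"] that by simp
  qed (rule z_Suc)
  also have "(\<Sum>k<M - 1. c (Suc k)) = \<sigma> 1 - \<sigma> M"
    using \<sigma>_Suc \<open>0 < M\<close> sum_lessThan_telescope'[of "\<lambda>k. \<sigma> (Suc k)" "M - 1"] by simp
  also have "V (N - (M - 1)) (z (Suc (M - 1))) \<le> (\<beta> + 1) * \<sigma> M"
    using V_Nt_Suc_le[of "z M"] z_in_X[of M] \<open>0 < M\<close>
    by (simp add: \<sigma>_def M_def Suc_diff_Suc del: Vfun.simps)
  also have "\<sigma> 1 - \<sigma> M + (\<beta> + 1) * \<sigma> M = \<sigma> 1 + \<beta> * \<sigma> M"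
    by (simp add: algebra_simps)
  also have "\<dots> \<le> \<sigma> 0 - (1 - \<beta> ^ (M + 1) / (\<beta> + 1) ^ (M - 1)) * c 0"
    using \<open>0 < M\<close> \<open>0 < \<beta>\<close> \<sigma>_Suc \<sigma>_le by (rule geometric_tail_bound)
  finally show ?thesis
    by (simp add: \<sigma>_def c_def z_def M_def)
qed

end

theorem theorem1:
  fixes D :: "(real ^ 'n) set" and U :: "(real ^ 'm) set" and X :: "(real ^ 'n) set"
    and f :: "real ^ 'n \<Rightarrow> real ^ 'm \<Rightarrow> real ^ 'n"
    and l :: "real ^ 'n \<Rightarrow> real ^ 'm \<Rightarrow> real"
    and mu :: "nat \<Rightarrow> real ^ 'n \<Rightarrow> real ^ 'm"
    and N Nt :: nat and \<beta> :: real
  assumes D_compact: "compact D" and U_compact: "compact U"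
    and zero_D: "0 \<in> D" and zero_U: "0 \<in> U"
    and f_maps: "\<forall>x\<in>D. \<forall>u\<in>U. f x u \<in> D"
    and f_zero: "f 0 0 = 0"
    and l_nonneg: "\<forall>x\<in>D. \<forall>u\<in>U. 0 \<le> l x u"
    and l_pos: "\<forall>x\<in>D. \<forall>u\<in>U. (x, u) \<noteq> (0, 0) \<longrightarrow> 0 < l x u"
    and l_zero: "l 0 0 = 0"
    and X_sub: "X \<subseteq> D"
    and X_inv: "\<forall>x\<in>X. \<exists>u\<in>U. f x u \<in> X"
    and mu_unc: "\<forall>n\<in>{1..Nt}. \<forall>x\<in>D. mu n x \<in> U \<and>
        (\<forall>u\<in>U. Vfun f l U X Nt (n - 1) (f x (mu n x)) + l x (mu n x)
                  \<le> Vfun f l U X Nt (n - 1) (f x u) + l x u)"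
    and mu_con: "\<forall>n\<in>{Nt+1..N}. \<forall>x\<in>X. mu n x \<in> Uadm f U X x \<and>
        (\<forall>u\<in>Uadm f U X x. Vfun f l U X Nt (n - 1) (f x (mu n x)) + l x (mu n x)
                  \<le> Vfun f l U X Nt (n - 1) (f x u) + l x u)"
    and N_ge: "2 \<le> N" and Nt_ge: "1 \<le> Nt" and Nt_le: "Nt \<le> N - 1"
    and beta_pos: "0 < \<beta>"
    and beta_cond: "(\<beta> + 1) ^ (N - Nt - 1) > \<beta> ^ (N - Nt + 1)"
    and hyp1: "\<forall>x\<in>X. Vfun f l U X Nt (Nt + 1) x \<le> (\<beta> + 1) * Vfun f l U X Nt Nt x"
    and hyp2: "\<forall>x\<in>X. \<forall>n\<in>{Nt+1..N}. Vfun f l U X Nt n x \<le> (\<beta> + 1) * l x (mu n x)"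
  shows "\<forall>x\<in>X.
     summable (\<lambda>k. l (cl_traj f (mu N) x k) (mu N (cl_traj f (mu N) x k))) \<and>
     (1 - \<beta> ^ (N - Nt + 1) / (\<beta> + 1) ^ (N - Nt - 1)) *
       (\<Sum>k. l (cl_traj f (mu N) x k) (mu N (cl_traj f (mu N) x k)))
     \<le> Vfun f l U X Nt N x"
proof -
  interpret mpc_feedback f l U D X Nt mu N
    using zero_U f_maps l_nonneg X_sub X_inv mu_con by unfold_locales (auto simp: Uadm_def)
  define \<alpha> where "\<alpha> = 1 - \<beta> ^ (N - Nt + 1) / (\<beta> + 1) ^ (N - Nt - 1)"
  have "0 < \<alpha>"
    using beta_cond beta_pos by (simp add: \<alpha>_def field_simps)
  have mu_N_admissible: "mu N y \<in> Uadm f U X y" if "y \<in> X" for y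
    using mu_admissible[OF _ that] Nt_le N_ge by simp
  show ?thesis
    unfolding cl_traj_def \<alpha>_def[symmetric]
  proof (intro ballI relaxed_dp_inequality[where S = X])
    show "f y (mu N y) \<in> X" "0 \<le> l y (mu N y)" if "y \<in> X" for y
      using mu_N_admissible[OF that] that X_sub l_nonneg by (auto simp: Uadm_def)
    show "V N (f y (mu N y)) + \<alpha> * l y (mu N y) \<le> V N y" if "y \<in> X" for y
      unfolding \<alpha>_def using that Nt_le N_ge beta_pos hyp1 hyp2
      by (intro V_decrease) auto
  qed (use \<open>0 < \<alpha>\<close> V_nonneg in auto)
qed

end
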